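(* Let $\mathbf{FdHilb}_{\mathrm{Un}}$ be the category of finite-dimensional Hilbert spaces with unitary maps, $\mathbf{Conv}$ the category of convex sets with affine maps, and $\mathbf{EMod}$ the category of effect modules over $[0,1]$. For $H$ in $\mathbf{FdHilb}_{\mathrm{Un}}$ let $\mathcal{DM}(H)=\{A \ge 0 : \mathrm{tr}(A)=1\}$ be the convex set of density operators and $\mathcal{E}f(H)=\{A : 0\le A\le I\}$ (Löwner order) the effect module of effects. There is a dual adjunction $\mathbf{Conv}(-,[0,1]) \colon \mathbf{Conv}\rightleftarrows \mathbf{EMod}^{\mathrm{op}} \colon \mathbf{EMod}(-,[0,1])$, and there are natural isomorphisms $$\mathrm{hs}_{\mathcal{E}f}\colon \mathcal{E}f(H)\xrightarrow{\ \cong\ } \mathbf{Conv}\big(\mathcal{DM}(H),[0,1]\big),\ A\mapsto \mathrm{tr}(A\,-),\qquad \mathrm{hs}_{\mathcal{DM}}\colon \mathcal{DM}(H)\xrightarrow{\ \cong\ } \mathbf{EMod}\big(\mathcal{E}f(H),[0,1]\big),\ B\mapsto \mathrm{tr}(B\,-),$$ in $\mathbf{EMod}$ and $\mathbf{Conv}$ respectively, which give rise to a map of adjunctions from the self-adjunction $(-)^\dagger \dashv (-)^\dagger$ between $\mathbf{FdHilb}_{\mathrm{Un}}$ and $\mathbf{FdHilb}_{\mathrm{Un}}^{\mathrm{op}}$ to the adjunction $\mathbf{Conv}\rightleftarrows\mathbf{EMod}^{\mathrm{op}}$, with vertical functors $\mathcal{DM}\colon \mathbf{FdHilb}_{\mathrm{Un}}\to\mathbf{Conv}$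 (states) and $\mathcal{E}f\colon \mathbf{FdHilb}_{\mathrm{Un}}^{\mathrm{op}}\to\mathbf{EMod}^{\mathrm{op}}$ (statements/effects).
   Context: An effect algebra is a partial commutative monoid $(E,0,\oplus)$, where $\oplus$ is a partial, commutative, associative binary operation with unit $0$ (write $x\perp y$ when $x\oplus y$ is defined), with an orthosupplement $(-)^\perp$ such that $x^\perp$ is the unique element with $x\oplus x^\perp = 1 := 0^\perp$ and $x\perp 1\Rightarrow x=0$. An effect module over $[0,1]$ is an effect algebra with a scalar multiplication by $[0,1]$ that preserves $\oplus$ in each variable and is a monoid action; morphisms preserve $1$, defined sums and scalars. $\mathcal{E}f(H)$ is an effect module with $A\perp B$ iff $A+B\le I$, $A\oplus B = A+B$, $A^\perp = I-A$, and usual scalar multiplication. Convex sets are Eilenberg-Moore algebras of the finitary distribution monad; $\mathcal{DM}(H)$ is convex under ordinary convex combinations of operators. On a unitary $U\colon H\to K$, both functors act by $A\mapsto UAU^\dagger$. The adjunction $\mathbf{Conv}\rightleftarrows\mathbf{EMod}^{\mathrm{op}}$ is given by homming into $[0,1]$: $\mathbf{Conv}(X,[0,1])$ is an effect module with pointwise partial sum (defined when the pointwise sum stays $\le 1$) and pointwise scalar multiplication, $\mathbf{EMod}(Y,[0,1])$ is a convex set with pointwise convex combinations, and the correspondence is by swapping arguments. $\mathrm{tr}$ is the trace of an operator. *)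

theory Defs
  imports "HOL-Analysis.Analysis"
begin

text \<open>A finite-dimensional Hilbert space of dimension CARD('n) is modelled as complex^'n;
  operators on it are matrices complex^'n^'n; a unitary H -> K is a matrix complex^'n^'m.\<close>

definition cadj :: "complex^'n^'m \<Rightarrow> complex^'m^'n" where
  "cadj A = (\<chi> i j. cnj (A $ j $ i))"

definition unitary_map :: "complex^'n^'m \<Rightarrow> bool" where
  "unitary_map U \<longleftrightarrow> cadj U ** U = mat 1 \<and> U ** cadj U = mat 1"

definition psd :: "complex^'n^'n \<Rightarrow> bool" where
  "psd A \<longleftrightarrow> (\<forall>v::complex^'n.
      let q = (\<Sum>i\<in>UNIV. cnj (v $ i) * ((A *v v) $ i)) in Im q = 0 \<and> Re q \<ge> 0)"

definition loewner_le :: "complex^'n^'n \<Rightarrow> complex^'n^'n \<Rightarrow> bool" where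
  "loewner_le A B \<longleftrightarrow> psd (B - A)"

definition DM :: "(complex^'n^'n) set" where
  "DM = {B. psd B \<and> trace B = 1}"

definition Ef :: "(complex^'n^'n) set" where
  "Ef = {A. loewner_le 0 A \<and> loewner_le A (mat 1)}"

definition ConvHom01 :: "(complex^'n^'n) set \<Rightarrow> (complex^'n^'n \<Rightarrow> real) set" where
  "ConvHom01 X = {f \<in> extensional X. (\<forall>x\<in>X. 0 \<le> f x \<and> f x \<le> 1) \<and>
     (\<forall>x\<in>X. \<forall>y\<in>X. \<forall>r::real. 0 \<le> r \<and> r \<le> 1 \<longrightarrow>
        f (r *\<^sub>R x + (1 - r) *\<^sub>R y) = r * f x + (1 - r) * f y)}"

text \<open>EMod(Ef(H),[0,1]): maps preserving 1, defined sums (A perp B iff A+B <= I) and scalars.\<close>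
definition EModHom01 :: "(complex^'n^'n \<Rightarrow> real) set" where
  "EModHom01 = {g \<in> extensional (Ef :: (complex^'n^'n) set).
     (\<forall>A\<in>Ef. 0 \<le> g A \<and> g A \<le> 1) \<and> g (mat 1) = 1 \<and>
     (\<forall>A\<in>Ef. \<forall>B\<in>Ef. loewner_le (A + B) (mat 1) \<longrightarrow> g (A + B) = g A + g B) \<and>
     (\<forall>r::real. \<forall>A\<in>Ef. 0 \<le> r \<and> r \<le> 1 \<longrightarrow> g (r *\<^sub>R A) = r * g A)}"

text \<open>The maps of the theorem (tr(AB) is real for positive A,B; we take its real part).\<close>
definition hs_Ef :: "complex^'n^'n \<Rightarrow> (complex^'n^'n \<Rightarrow> real)" where
  "hs_Ef A = restrict (\<lambda>B. Re (trace (A ** B))) DM"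

definition hs_DM :: "complex^'n^'n \<Rightarrow> (complex^'n^'n \<Rightarrow> real)" where
  "hs_DM B = restrict (\<lambda>A. Re (trace (B ** A))) Ef"

end

theory Submission
  imports Defs
begin

text \<open>Both maps are the trace pairing \<open>(A, B) \<mapsto> tr (A B)\<close>, which lies in \<open>[0, 1]\<close> because
  \<open>tr (A B) \<ge> 0\<close> for positive \<open>A\<close> and \<open>B\<close>. An effect or a state is determined by its quadratic
  form, i.e. by its pairings with the pure states \<open>v v\<^sup>* / |v|\<^sup>2\<close>; this gives injectivity.
  For surjectivity of \<open>hs_Ef\<close>, an affine \<open>f\<close> on states extends to an additive, positively
  homogeneous functional on the positive cone. The Hermitian matrices \<open>E\<^sub>i\<^sub>j + E\<^sub>j\<^sub>i\<close> and
  \<open>\<i> (E\<^sub>i\<^sub>j - E\<^sub>j\<^sub>i)\<close> are differences of positive rank-one matrices and span all Hermitian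
  matrices over the reals, so this functional is \<open>tr (A -)\<close> for the matrix \<open>A\<close> read off from
  its values on them. An effect-module map is homogeneous, hence determined by its restriction
  to states, which reduces surjectivity of \<open>hs_DM\<close> to that of \<open>hs_Ef\<close>. Naturality and the
  compatibility with unit and counit are cyclicity of the trace.\<close>

section \<open>Sesquilinear forms and positive matrices\<close>

definition cinner :: "complex^'n \<Rightarrow> complex^'n \<Rightarrow> complex" where
  "cinner x y = (\<Sum>i\<in>UNIV. cnj (x$i) * y$i)"

definition sesq :: "complex^'n^'n \<Rightarrow> complex^'n \<Rightarrow> complex^'n \<Rightarrow> complex" where
  "sesq A x y = (\<Sum>i\<in>UNIV. \<Sum>j\<in>UNIV. cnj (x$i) * A$i$j * y$j)"

abbreviation quad_form :: "complex^'n^'n \<Rightarrow> complex^'n \<Rightarrow> complex" where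
  "quad_form A v \<equiv> sesq A v v"

definition hermitian :: "complex^'n^'n \<Rightarrow> bool" where
  "hermitian A \<longleftrightarrow> (\<forall>i j. A$j$i = cnj (A$i$j))"

definition outer :: "complex^'n \<Rightarrow> complex^'n^'n" where
  "outer v = (\<chi> p q. v$p * cnj (v$q))"

lemma sesq_cinner: "sesq A x y = cinner x (A *v y)"
  by (simp add: sesq_def cinner_def matrix_vector_mult_def sum_distrib_left mult.assoc)

lemma psd_iff_quad_form: "psd A \<longleftrightarrow> (\<forall>v. Im (quad_form A v) = 0 \<and> Re (quad_form A v) \<ge> 0)"
  unfolding psd_def sesq_cinner cinner_def Let_def by simp

lemma sesq_add_left: "sesq A (x + y) z = sesq A x z + sesq A y z"
  by (simp add: sesq_def distrib_right sum.distrib)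

lemma sesq_add_right: "sesq A x (y + z) = sesq A x y + sesq A x z"
  by (simp add: sesq_def distrib_left sum.distrib)

lemma quad_form_add: "quad_form A (x + y) = quad_form A x + sesq A x y + sesq A y x + quad_form A y"
  by (simp add: sesq_add_left sesq_add_right)

lemma sesq_axis_left: "sesq A (axis i a) y = cnj a * (\<Sum>j\<in>UNIV. A$i$j * y$j)"
proof -
  have "(\<lambda>i'. \<Sum>j\<in>UNIV. cnj ((axis i a)$i') * A$i'$j * y$j) =
        (\<lambda>i'. if i' = i then cnj a * (\<Sum>j\<in>UNIV. A$i$j * y$j) else 0)"
    by (auto simp: axis_def sum_distrib_left mult.assoc)
  then show ?thesis unfolding sesq_def by (simp only:) simp
qed

lemma sesq_axis_right: "sesq A x (axis j b) = (\<Sum>i\<in>UNIV. cnj (x$i) * A$i$j) * b"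
proof -
  have "sesq A x (axis j b) = (\<Sum>i\<in>UNIV. cnj (x$i) * A$i$j * b)"
    unfolding sesq_def by (rule sum.cong) (auto simp: axis_def if_distrib cong: if_cong)
  then show ?thesis by (simp add: sum_distrib_right)
qed

lemma sesq_axis: "sesq A (axis i a) (axis j b) = cnj a * A$i$j * b"
proof -
  have "(\<lambda>j'. A$i$j' * (axis j b)$j') = (\<lambda>j'. if j' = j then A$i$j * b else 0)"
    by (auto simp: axis_def)
  then show ?thesis unfolding sesq_axis_left by (simp only:) simp
qed

lemma scaleR_matrix_entry: "(c *\<^sub>R (A::complex^'n^'m))$i$j = of_real c * A$i$j"
  by (simp only: vector_scaleR_component) (simp add: scaleR_conv_of_real)

lemma sesq_add: "sesq (A + B) x y = sesq A x y + sesq B x y"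
  by (simp add: sesq_def algebra_simps sum.distrib)

lemma sesq_diff: "sesq (A - B) x y = sesq A x y - sesq B x y"
  by (simp add: sesq_def algebra_simps sum_subtractf)

lemma sesq_scaleR: "sesq (c *\<^sub>R A) x y = of_real c * sesq A x y"
  unfolding sesq_def scaleR_matrix_entry
  by (simp add: sum_distrib_left mult.assoc mult.left_commute)

lemma norm_vec_square: "(norm (v::complex^'n))^2 = (\<Sum>i\<in>UNIV. (cmod (v$i))^2)"
  by (simp add: norm_vec_def L2_set_def sum_nonneg)

lemma cinner_self: "cinner x x = of_real ((norm x)^2)"
  unfolding cinner_def norm_vec_square of_real_sum
  by (rule sum.cong) (simp_all only: complex_norm_square mult.commute)

lemma quad_form_mat_1: "quad_form (mat 1) x = of_real ((norm x)^2)"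
  by (simp add: sesq_cinner cinner_self)

lemma cinner_Cauchy_Schwarz: "(cmod (cinner x v))^2 \<le> (norm x)^2 * (norm v)^2"
proof -
  have "cmod (cinner x v) \<le> (\<Sum>i\<in>UNIV. cmod (x$i) * cmod (v$i))"
    unfolding cinner_def by (rule order_trans[OF norm_sum]) (simp add: norm_mult)
  then have "(cmod (cinner x v))^2 \<le> (\<Sum>i\<in>UNIV. cmod (x$i) * cmod (v$i))^2"
    by (rule power_mono[OF _ norm_ge_zero])
  also have "\<dots> \<le> (norm x)^2 * (norm v)^2"
    unfolding norm_vec_square by (rule Cauchy_Schwarz_ineq_sum)
  finally show ?thesis .
qed

lemma quad_form_outer: "quad_form (outer v) x = of_real ((cmod (cinner x v))^2)"
proof -
  have "quad_form (outer v) x = cinner x v * cnj (cinner x v)"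
    unfolding sesq_def outer_def cinner_def by (simp add: sum_product mult.commute mult.left_commute)
  then show ?thesis by (simp only: complex_norm_square)
qed

lemma matrix_mult_diff_left: "((A - B) :: 'a::ring_1^'n^'m) ** C = A ** C - B ** C"
  by (simp add: matrix_matrix_mult_def vec_eq_iff left_diff_distrib sum_subtractf)

lemma matrix_mult_diff_right: "(C :: 'a::ring_1^'n^'m) ** (A - B) = C ** A - C ** B"
  by (simp add: matrix_matrix_mult_def vec_eq_iff right_diff_distrib sum_subtractf)

lemma trace_matrix_mult: "trace (A ** B) = (\<Sum>i\<in>UNIV. \<Sum>j\<in>UNIV. A$i$j * B$j$i)"
  by (simp add: trace_def matrix_matrix_mult_def)

lemma trace_mult_outer: "trace (A ** outer v) = quad_form A v"
  unfolding trace_matrix_mult outer_def sesq_def by (simp add: mult.commute mult.left_commute)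

lemma trace_outer: "trace (outer v) = of_real ((norm v)^2)"
  unfolding trace_def outer_def norm_vec_square of_real_sum
  by (simp del: of_real_power add: complex_norm_square)

lemma trace_scaleR: "trace (c *\<^sub>R (A::complex^'n^'n)) = of_real c * trace A"
  by (simp add: trace_def scaleR_matrix_entry sum_distrib_left scaleR_conv_of_real[where 'a = complex])

lemma trace_mult_add_left: "trace ((A + B) ** C) = trace (A ** C) + trace (B ** (C::complex^'n^'n))"
  by (simp add: trace_matrix_mult distrib_right sum.distrib)

lemma trace_mult_add_right: "trace (C ** (A + B)) = trace (C ** A) + trace (C ** (B::complex^'n^'n))"
  by (simp add: trace_matrix_mult distrib_left sum.distrib)

lemma trace_mult_diff_left: "trace ((A - B) ** C) = trace (A ** C) - trace (B ** (C::complex^'n^'n))"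
  by (simp add: trace_matrix_mult left_diff_distrib sum_subtractf)

lemma trace_mult_diff_right: "trace (C ** (A - B)) = trace (C ** A) - trace (C ** (B::complex^'n^'n))"
  by (simp add: trace_matrix_mult right_diff_distrib sum_subtractf)

lemma trace_mult_scaleR_left: "trace ((c *\<^sub>R A) ** C) = of_real c * trace (A ** (C::complex^'n^'n))"
  by (simp add: trace_matrix_mult scaleR_matrix_entry sum_distrib_left mult.assoc scaleR_conv_of_real[where 'a = complex])

lemma trace_mult_scaleR_right: "trace (C ** (c *\<^sub>R A)) = of_real c * trace (C ** (A::complex^'n^'n))"
  by (simp add: trace_matrix_mult scaleR_matrix_entry sum_distrib_left mult.left_commute scaleR_conv_of_real[where 'a = complex])

lemma hermitian_cnj_entry: "hermitian A \<Longrightarrow> cnj (A$i$j) = A$j$i"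
  unfolding hermitian_def by metis

lemma hermitian_quad_form_real: assumes "hermitian A" shows "Im (quad_form A v) = 0"
proof -
  have "cnj (quad_form A v) = (\<Sum>i\<in>UNIV. \<Sum>j\<in>UNIV. v$i * A$j$i * cnj (v$j))"
    using assms by (simp add: sesq_def hermitian_cnj_entry)
  also have "\<dots> = quad_form A v" unfolding sesq_def
    by (subst sum.swap) (simp add: mult.commute mult.left_commute)
  finally show ?thesis by (metis Reals_cnj_iff complex_is_Real_iff)
qed

lemma psd_outer: "psd (outer v)"
  unfolding psd_iff_quad_form quad_form_outer by simp

lemma psd_mat_1: "psd (mat 1 :: complex^'n^'n)"
  unfolding psd_iff_quad_form quad_form_mat_1 by simp

lemma psd_zero: "psd 0"
  unfolding psd_iff_quad_form sesq_def by simp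

lemma psd_add: "psd A \<Longrightarrow> psd B \<Longrightarrow> psd (A + B)"
  unfolding psd_iff_quad_form sesq_add by simp

lemma psd_scaleR: "0 \<le> c \<Longrightarrow> psd A \<Longrightarrow> psd (c *\<^sub>R A)"
  unfolding psd_iff_quad_form sesq_scaleR by simp

lemma psd_imp_hermitian: assumes "psd A" shows "hermitian A"
  unfolding hermitian_def
proof (intro allI)
  fix i j
  have real: "\<And>v. Im (quad_form A v) = 0" using assms psd_iff_quad_form by blast
  have diag: "Im (A$i$i) = 0" "Im (A$j$j) = 0"
    using real[of "axis i 1"] real[of "axis j 1"] by (simp_all add: sesq_axis)
  have "Im (A$i$j + A$j$i) = 0"
    using real[of "axis i 1 + axis j 1"] diag by (simp add: sesq_add_left sesq_add_right sesq_axis)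
  moreover have "Re (A$i$j) - Re (A$j$i) = 0"
    using real[of "axis i 1 + axis j \<i>"] diag by (simp add: sesq_add_left sesq_add_right sesq_axis)
  ultimately show "A$j$i = cnj (A$i$j)" by (simp add: complex_eq_iff)
qed

lemma psd_diag_real: "psd A \<Longrightarrow> Im (A$i$i) = 0"
  unfolding psd_iff_quad_form by (drule spec[of _ "axis i 1"]) (simp add: sesq_axis)

lemma psd_diag_nonneg: "psd A \<Longrightarrow> Re (A$i$i) \<ge> 0"
  unfolding psd_iff_quad_form by (drule spec[of _ "axis i 1"]) (simp add: sesq_axis)

text \<open>If \<open>A\<^sub>i\<^sub>j \<noteq> 0\<close>, the form is negative at \<open>e\<^sub>j - l A\<^sub>i\<^sub>j e\<^sub>i\<close> for large \<open>l\<close>.\<close>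
lemma psd_diag_zero_row: assumes "psd A" "A$i$i = 0" shows "A$i$j = 0"
proof (rule ccontr)
  assume nonzero: "A$i$j \<noteq> 0"
  define a where "a = A$i$j"
  have conj: "A$j$i = cnj a"
    using hermitian_cnj_entry[OF psd_imp_hermitian[OF assms(1)], of i j] unfolding a_def by simp
  define l where "l = (Re (A$j$j) + 1) / (2 * (cmod a)^2)"
  have "cmod a > 0" using nonzero a_def by simp
  then have l: "2 * l * (cmod a)^2 = Re (A$j$j) + 1" unfolding l_def by simp
  define t where "t = - (of_real l) * a"
  have form: "quad_form A (axis j 1 + axis i t) = A$j$j + cnj a * t + cnj t * a"
    unfolding sesq_add_left sesq_add_right sesq_axis using assms(2) conj a_def by simp
  have "cnj a * t = - of_real l * (cnj a * a)" "cnj t * a = - of_real l * (cnj a * a)"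
    unfolding t_def by (simp_all add: algebra_simps)
  moreover have "Re (cnj a * a) = (cmod a)^2"
    using cmod_power2[of a] by (simp add: power2_eq_square)
  ultimately have "Re (cnj a * t) = - l * (cmod a)^2" "Re (cnj t * a) = - l * (cmod a)^2"
    by simp_all
  then have "Re (quad_form A (axis j 1 + axis i t)) = - 1" using form l by simp
  moreover have "Re (quad_form A (axis j 1 + axis i t)) \<ge> 0" using assms(1) psd_iff_quad_form by blast
  ultimately show False by simp
qed

definition pivot_part :: "complex^'n^'n \<Rightarrow> 'n \<Rightarrow> complex^'n^'n" where
  "pivot_part A i = (\<chi> p q. A$p$i * A$i$q / A$i$i)"

text \<open>Schur complement: \<open>v \<mapsto> v + t e\<^sub>i\<close> with \<open>t = -(A v)\<^sub>i / A\<^sub>i\<^sub>i\<close> turns the quadratic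
  form of the complement into that of \<open>A\<close>.\<close>
lemma psd_schur_complement:
  fixes A :: "complex^'n^'n"
  assumes "psd A" "A$i$i \<noteq> 0"
  shows "psd (A - pivot_part A i)"
  unfolding psd_iff_quad_form
proof
  let ?R = "pivot_part A i"
  have herm: "hermitian A" using psd_imp_hermitian[OF assms(1)] .
  have real_diag: "cnj (A$i$i) = A$i$i" using hermitian_cnj_entry[OF herm, of i i] by simp
  fix v :: "complex^'n"
  define s where "s = (\<Sum>q\<in>UNIV. A$i$q * v$q)"
  define t where "t = - s / A$i$i"
  have col: "(\<Sum>p\<in>UNIV. cnj (v$p) * A$p$i) = cnj s"
    unfolding s_def using hermitian_cnj_entry[OF herm] by (simp add: mult.commute)
  have "quad_form ?R v = (\<Sum>p\<in>UNIV. \<Sum>q\<in>UNIV. (cnj (v$p) * A$p$i) * (A$i$q * v$q) / A$i$i)"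
    unfolding sesq_def pivot_part_def by (intro sum.cong refl) simp
  also have "\<dots> = (\<Sum>p\<in>UNIV. cnj (v$p) * A$p$i) * (\<Sum>q\<in>UNIV. A$i$q * v$q) / A$i$i"
    by (simp only: sum_product sum_divide_distrib)
  also have "\<dots> = cnj s * s / A$i$i"
    unfolding col s_def ..
  finally have R: "quad_form ?R v = cnj s * s / A$i$i" .
  have "quad_form A (v + axis i t) = quad_form A v + cnj s * t + cnj t * s + cnj t * A$i$i * t"
    unfolding quad_form_add unfolding sesq_axis unfolding sesq_axis_right sesq_axis_left col s_def
    by simp
  also have "\<dots> = quad_form A v - cnj s * s / A$i$i"
    unfolding t_def using assms(2) real_diag by (simp add: field_simps)
  finally have "quad_form (A - ?R) v = quad_form A (v + axis i t)" using R by (simp add: sesq_diff)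
  then show "Im (quad_form (A - ?R) v) = 0 \<and> 0 \<le> Re (quad_form (A - ?R) v)"
    using assms(1) unfolding psd_iff_quad_form by simp
qed

lemma psd_trace_real: assumes "psd A" shows "trace A = of_real (Re (trace A))"
  using psd_diag_real[OF assms] by (simp add: complex_eq_iff trace_def)

lemma psd_trace_nonneg: assumes "psd A" shows "Re (trace A) \<ge> 0"
  using psd_diag_nonneg[OF assms] by (simp add: trace_def sum_nonneg)

lemma psd_trace_eq_0_imp_zero: assumes "psd A" "Re (trace A) = 0" shows "A = 0"
proof -
  have "\<forall>i\<in>UNIV. Re (A$i$i) = 0"
    using assms(2) psd_diag_nonneg[OF assms(1)] sum_nonneg_eq_0_iff[of UNIV "\<lambda>i. Re (A$i$i)"]
    by (simp add: trace_def)
  then have "\<And>i. A$i$i = 0" using psd_diag_real[OF assms(1)] by (simp add: complex_eq_iff)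
  then show ?thesis using psd_diag_zero_row[OF assms(1)] by (simp add: vec_eq_iff)
qed

lemma pivot_part_clears_row:
  assumes "B$i$i \<noteq> 0"
  shows "{p. \<exists>q. (B - pivot_part B i)$p$q \<noteq> 0} \<subseteq> {p. \<exists>q. B$p$q \<noteq> 0} - {i}"
proof
  fix p assume "p \<in> {p. \<exists>q. (B - pivot_part B i)$p$q \<noteq> 0}"
  then obtain q where q: "(B - pivot_part B i)$p$q \<noteq> 0" by blast
  have entry: "(B - pivot_part B i)$p$q = B$p$q - B$p$i * B$i$q / B$i$i" by (simp add: pivot_part_def)
  then have "p \<noteq> i" using q assms by auto
  moreover have "\<exists>q. B$p$q \<noteq> 0" using q entry by (metis diff_zero div_0 mult_zero_left)
  ultimately show "p \<in> {p. \<exists>q. B$p$q \<noteq> 0} - {i}" by blast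
qed

text \<open>\<open>pivot_part B i\<close> is \<open>u u\<^sup>* / B\<^sub>i\<^sub>i\<close> for the column \<open>u = B e\<^sub>i\<close>.\<close>
lemma trace_mult_pivot_part_nonneg:
  fixes A B :: "complex^'n^'n"
  assumes "psd A" "psd B" "B$i$i \<noteq> 0"
  shows "Re (trace (A ** pivot_part B i)) \<ge> 0"
proof -
  have herm: "hermitian B" using psd_imp_hermitian[OF assms(2)] .
  have Bii_real: "B$i$i = of_real (Re (B$i$i))"
    using psd_diag_real[OF assms(2), of i] by (simp add: complex_eq_iff)
  have Bii_pos: "Re (B$i$i) > 0"
    using psd_diag_nonneg[OF assms(2), of i] assms(3) Bii_real by (metis less_eq_real_def of_real_0)
  define u where "u = ((\<chi> p. B$p$i)::complex^'n)"
  have "trace (A ** pivot_part B i) = (\<Sum>p\<in>UNIV. \<Sum>q\<in>UNIV. A$p$q * (B$q$i * B$i$p / B$i$i))"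
    unfolding trace_matrix_mult pivot_part_def by simp
  also have "\<dots> = quad_form A u / B$i$i"
    unfolding sesq_def u_def using hermitian_cnj_entry[OF herm]
    by (simp add: sum_divide_distrib mult.commute mult.left_commute)
  finally have "trace (A ** pivot_part B i) = quad_form A u / of_real (Re (B$i$i))" using Bii_real by simp
  then show ?thesis using assms(1) Bii_pos unfolding psd_iff_quad_form by simp
qed

text \<open>Induction on the number of nonzero rows of \<open>B\<close>: \<open>B\<close> splits into its pivot part and a
  positive Schur complement with one more zero row.\<close>
lemma trace_mult_psd_nonneg: "psd A \<Longrightarrow> psd B \<Longrightarrow> Re (trace (A ** B)) \<ge> 0"
proof (induction "card {p. \<exists>q. B$p$q \<noteq> 0}" arbitrary: B rule: less_induct)
  case less
  show ?case
  proof (cases "\<exists>p q. B$p$q \<noteq> 0")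
    case False
    then have "B = 0" by (simp add: vec_eq_iff)
    then show ?thesis by (simp add: trace_def)
  next
    case True
    then obtain i q where iq: "B$i$q \<noteq> 0" by blast
    then have Bii: "B$i$i \<noteq> 0" using psd_diag_zero_row[OF less.prems(2)] by blast
    have "card {p. \<exists>q. (B - pivot_part B i)$p$q \<noteq> 0} < card {p. \<exists>q. B$p$q \<noteq> 0}"
      using pivot_part_clears_row[OF Bii]
      by (rule le_less_trans[OF card_mono[OF finite]]) (use iq in \<open>auto intro!: card_Diff1_less\<close>)
    then have "Re (trace (A ** (B - pivot_part B i))) \<ge> 0"
      using less.hyps less.prems(1) psd_schur_complement[OF less.prems(2) Bii] by blast
    then show ?thesis
      using trace_mult_pivot_part_nonneg[OF less.prems Bii] by (simp add: trace_mult_diff_right)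
  qed
qed

lemma quad_form_le_trace: assumes "psd B" shows "Re (quad_form B v) \<le> Re (trace B) * (norm v)^2"
proof -
  define C where "C = (norm v)^2 *\<^sub>R mat 1 - outer v"
  have "psd C" unfolding psd_iff_quad_form
  proof
    fix x
    have "quad_form C x = of_real ((norm v)^2 * (norm x)^2 - (cmod (cinner x v))^2)"
      unfolding C_def sesq_diff sesq_scaleR quad_form_mat_1 quad_form_outer by simp
    then show "Im (quad_form C x) = 0 \<and> 0 \<le> Re (quad_form C x)"
      using cinner_Cauchy_Schwarz[of x v] by (simp add: mult.commute)
  qed
  then have "Re (trace (B ** C)) \<ge> 0" using trace_mult_psd_nonneg assms by blast
  moreover have "trace (B ** C) = of_real ((norm v)^2) * trace B - quad_form B v"
    unfolding C_def trace_mult_diff_right trace_mult_scaleR_right trace_mult_outer by simp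
  ultimately show ?thesis by (simp add: mult.commute)
qed

lemma quad_form_eq_0_imp_zero: assumes "\<And>v. quad_form A v = 0" shows "A = 0"
proof -
  have "psd A" unfolding psd_iff_quad_form using assms by simp
  moreover have "\<And>i. A$i$i = 0" using assms[of "axis i 1" for i] by (simp add: sesq_axis)
  ultimately show ?thesis using psd_diag_zero_row[of A] by (simp add: vec_eq_iff)
qed

lemma hermitian_eqI:
  assumes "hermitian A" "hermitian B" "\<And>v. v \<noteq> 0 \<Longrightarrow> Re (quad_form A v) = Re (quad_form B v)"
  shows "A = B"
proof -
  have "quad_form (A - B) v = 0" for v
  proof (cases "v = 0")
    case True then show ?thesis by (simp add: sesq_def)
  next
    case False
    then show ?thesis
      using assms(3)[OF False] hermitian_quad_form_real[OF assms(1)] hermitian_quad_form_real[OF assms(2)]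
      by (simp add: sesq_diff complex_eq_iff)
  qed
  then show ?thesis using quad_form_eq_0_imp_zero[of "A - B"] by simp
qed

section \<open>Effects, states and the trace pairing\<close>

lemma in_Ef_iff: "A \<in> Ef \<longleftrightarrow> psd A \<and> psd (mat 1 - A)"
  by (simp add: Ef_def loewner_le_def)

lemma in_DM_iff: "B \<in> DM \<longleftrightarrow> psd B \<and> trace B = 1"
  by (simp add: DM_def)

lemma mat_1_in_Ef: "mat 1 \<in> Ef"
  unfolding in_Ef_iff by (simp add: psd_mat_1 psd_zero)

lemma Ef_add: "A \<in> Ef \<Longrightarrow> B \<in> Ef \<Longrightarrow> loewner_le (A + B) (mat 1) \<Longrightarrow> A + B \<in> Ef"
  unfolding in_Ef_iff loewner_le_def by (simp add: psd_add)

lemma Ef_scaleR: assumes "A \<in> Ef" "0 \<le> r" "r \<le> 1" shows "r *\<^sub>R A \<in> Ef"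
proof -
  have A: "psd A" "psd (mat 1 - A)" using assms(1) in_Ef_iff by auto
  have "mat 1 - r *\<^sub>R A = (1 - r) *\<^sub>R mat 1 + r *\<^sub>R (mat 1 - A)" by (simp add: algebra_simps)
  moreover have "psd ((1 - r) *\<^sub>R mat 1 + r *\<^sub>R (mat 1 - A))"
    using assms by (intro psd_add psd_scaleR A psd_mat_1) auto
  ultimately show ?thesis unfolding in_Ef_iff using A assms by (simp add: psd_scaleR)
qed

lemma DM_convex:
  assumes "X \<in> DM" "Y \<in> DM" "0 \<le> r" "r \<le> 1"
  shows "r *\<^sub>R X + (1 - r) *\<^sub>R Y \<in> DM"
  using assms unfolding in_DM_iff by (auto intro!: psd_add psd_scaleR simp: trace_add trace_scaleR)

lemma psd_normalize_in_DM: "psd X \<Longrightarrow> Re (trace X) > 0 \<Longrightarrow> (1 / Re (trace X)) *\<^sub>R X \<in> DM"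
  unfolding in_DM_iff using psd_trace_real[of X] by (auto simp: psd_scaleR trace_scaleR)

lemma DM_subset_Ef: "DM \<subseteq> Ef"
proof
  fix B :: "complex^'n^'n" assume "B \<in> DM"
  then have B: "psd B" "trace B = 1" using in_DM_iff by auto
  have "psd (mat 1 - B)" unfolding psd_iff_quad_form
  proof
    fix v
    have "quad_form (mat 1 - B) v = of_real ((norm v)^2) - quad_form B v"
      by (simp add: sesq_diff quad_form_mat_1)
    then show "Im (quad_form (mat 1 - B) v) = 0 \<and> 0 \<le> Re (quad_form (mat 1 - B) v)"
      using hermitian_quad_form_real[OF psd_imp_hermitian[OF B(1)]] quad_form_le_trace[OF B(1), of v] B(2)
      by simp
  qed
  then show "B \<in> Ef" using B in_Ef_iff by blast
qed

lemma trace_mult_Ef_DM_bounds: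
  assumes "A \<in> Ef" "B \<in> DM"
  shows "0 \<le> Re (trace (A ** B))" "Re (trace (A ** B)) \<le> 1"
proof -
  have A: "psd A" "psd (mat 1 - A)" using assms(1) in_Ef_iff by auto
  have B: "psd B" "trace B = 1" using assms(2) in_DM_iff by auto
  show "0 \<le> Re (trace (A ** B))" using trace_mult_psd_nonneg[OF A(1) B(1)] .
  have "0 \<le> Re (trace ((mat 1 - A) ** B))" using trace_mult_psd_nonneg[OF A(2) B(1)] .
  then show "Re (trace (A ** B)) \<le> 1" using B(2) by (simp add: trace_mult_diff_left)
qed

definition pure_state :: "complex^'n \<Rightarrow> complex^'n^'n" where
  "pure_state v = (1 / (norm v)^2) *\<^sub>R outer v"

lemma pure_state_in_DM: "v \<noteq> 0 \<Longrightarrow> pure_state v \<in> DM"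
  unfolding in_DM_iff pure_state_def by (simp add: psd_scaleR psd_outer trace_scaleR trace_outer)

lemma trace_mult_pure_state: "Re (trace (A ** pure_state v)) = Re (quad_form A v) / (norm v)^2"
  unfolding pure_state_def trace_mult_scaleR_right trace_mult_outer by simp

lemma hermitian_eq_if_pure_state_pairing_eq:
  assumes "hermitian A" "hermitian B"
    and "\<And>v. v \<noteq> 0 \<Longrightarrow> Re (trace (A ** pure_state v)) = Re (trace (B ** pure_state v))"
  shows "A = B"
  using assms(3) by (intro hermitian_eqI[OF assms(1,2)]) (simp add: trace_mult_pure_state)

lemma hermitian_le_mat_1_iff:
  fixes A :: "complex^'n^'n"
  assumes "hermitian A"
  shows "loewner_le A (mat 1) \<longleftrightarrow> (\<forall>X\<in>DM. Re (trace (A ** X)) \<le> 1)"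
proof
  assume "loewner_le A (mat 1)"
  then have "psd (mat 1 - A)" by (simp add: loewner_le_def)
  then show "\<forall>X\<in>DM. Re (trace (A ** X)) \<le> 1"
    using trace_mult_psd_nonneg by (fastforce simp: in_DM_iff trace_mult_diff_left)
next
  assume bound: "\<forall>X\<in>DM. Re (trace (A ** X)) \<le> 1"
  show "loewner_le A (mat 1)" unfolding loewner_le_def psd_iff_quad_form
  proof
    fix v :: "complex^'n"
    have form: "quad_form (mat 1 - A) v = of_real ((norm v)^2) - quad_form A v"
      by (simp add: sesq_diff quad_form_mat_1)
    have "Re (quad_form A v) \<le> (norm v)^2"
    proof (cases "v = 0")
      case True then show ?thesis by (simp add: sesq_def)
    next
      case False
      then show ?thesis using bound pure_state_in_DM[OF False]
        by (auto simp: trace_mult_pure_state divide_le_eq)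
    qed
    then show "Im (quad_form (mat 1 - A) v) = 0 \<and> 0 \<le> Re (quad_form (mat 1 - A) v)"
      unfolding form using hermitian_quad_form_real[OF assms] by simp
  qed
qed

section \<open>Affine maps on states as functionals on the positive cone\<close>

text \<open>Splitting \<open>c\<^sub>k = c\<^sub>k\<^sup>+ - c\<^sub>k\<^sup>-\<close> gives \<open>X + N = M\<close> with \<open>N\<close> and \<open>M\<close> sums of elements of the cone.\<close>
lemma cone_additive_sum_diff:
  fixes G :: "'a::real_vector \<Rightarrow> real" and C :: "'a \<Rightarrow> bool"
  assumes cone_add: "\<And>x y. C x \<Longrightarrow> C y \<Longrightarrow> C (x + y)"
    and cone_scaleR: "\<And>c x. 0 \<le> c \<Longrightarrow> C x \<Longrightarrow> C (c *\<^sub>R x)"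
    and add: "\<And>x y. C x \<Longrightarrow> C y \<Longrightarrow> G (x + y) = G x + G y"
    and scaleR: "\<And>c x. 0 \<le> c \<Longrightarrow> C x \<Longrightarrow> G (c *\<^sub>R x) = c * G x"
    and "finite K" "C X" "\<And>k. k \<in> K \<Longrightarrow> C (P k)" "\<And>k. k \<in> K \<Longrightarrow> C (Q k)"
    and X: "X = (\<Sum>k\<in>K. c k *\<^sub>R (P k - Q k))"
  shows "G X = (\<Sum>k\<in>K. c k * (G (P k) - G (Q k)))"
proof -
  have cone_sum: "C (\<Sum>k\<in>K. F k) \<and> G (\<Sum>k\<in>K. F k) = (\<Sum>k\<in>K. G (F k))"
    if "\<And>k. k \<in> K \<Longrightarrow> C (F k)" for F
    using \<open>finite K\<close> that
  proof (induction K rule: finite_induct)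
    case empty
    show ?case using cone_scaleR[of 0 X] scaleR[of 0 X] \<open>C X\<close> by simp
  next
    case (insert k K)
    then show ?case by (simp add: add cone_add)
  qed
  define pos where "pos k = max (c k) 0" for k
  define neg where "neg k = max (- c k) 0" for k
  have pos_neg: "0 \<le> pos k" "0 \<le> neg k" "pos k - neg k = c k" for k
    by (auto simp: pos_def neg_def)
  define N where "N k = neg k *\<^sub>R P k + pos k *\<^sub>R Q k" for k
  define M where "M k = pos k *\<^sub>R P k + neg k *\<^sub>R Q k" for k
  have CN: "C (N k)" "C (M k)" if "k \<in> K" for k
    unfolding N_def M_def using that pos_neg assms(7,8) by (simp_all add: cone_add cone_scaleR)
  have GN: "G (N k) = neg k * G (P k) + pos k * G (Q k)"
    and GM: "G (M k) = pos k * G (P k) + neg k * G (Q k)" if "k \<in> K" for k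
    unfolding N_def M_def using that pos_neg assms(7,8) by (simp_all add: add cone_scaleR scaleR)
  have "M k = c k *\<^sub>R (P k - Q k) + N k" for k
    unfolding M_def N_def pos_neg(3)[symmetric] by (simp add: algebra_simps)
  then have "(\<Sum>k\<in>K. M k) = X + (\<Sum>k\<in>K. N k)"
    unfolding X by (simp add: sum.distrib)
  then have "(\<Sum>k\<in>K. G (M k)) = G X + (\<Sum>k\<in>K. G (N k))"
    using cone_sum[of M] cone_sum[of N] CN add[OF \<open>C X\<close>] by simp
  then have "G X = (\<Sum>k\<in>K. G (M k) - G (N k))" by (simp add: sum_subtractf)
  also have "\<dots> = (\<Sum>k\<in>K. c k * (G (P k) - G (Q k)))"
    by (rule sum.cong) (simp_all add: GM GN pos_neg(3)[symmetric] algebra_simps)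
  finally show ?thesis .
qed

definition cone_ext :: "(complex^'n^'n \<Rightarrow> real) \<Rightarrow> complex^'n^'n \<Rightarrow> real" where
  "cone_ext f X = (if Re (trace X) = 0 then 0 else Re (trace X) * f ((1 / Re (trace X)) *\<^sub>R X))"

lemma cone_ext_zero: "cone_ext f 0 = 0"
  by (simp add: cone_ext_def trace_def)

context
  fixes f :: "complex^'n^'n \<Rightarrow> real"
  assumes f: "f \<in> ConvHom01 DM"
begin

lemma cone_ext_DM: "X \<in> DM \<Longrightarrow> cone_ext f X = f X"
  by (simp add: cone_ext_def in_DM_iff)

lemma cone_ext_bounds: assumes "psd X" shows "0 \<le> cone_ext f X" "cone_ext f X \<le> Re (trace X)"
proof -
  have "0 \<le> cone_ext f X \<and> cone_ext f X \<le> Re (trace X)"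
  proof (cases "Re (trace X) = 0")
    case False
    then have "Re (trace X) > 0" using psd_trace_nonneg[OF assms] by simp
    then have "0 \<le> f ((1 / Re (trace X)) *\<^sub>R X) \<and> f ((1 / Re (trace X)) *\<^sub>R X) \<le> 1"
      using f psd_normalize_in_DM[OF assms] unfolding ConvHom01_def by blast
    then show ?thesis using False psd_trace_nonneg[OF assms] by (simp add: cone_ext_def mult_left_le)
  qed (simp add: cone_ext_def)
  then show "0 \<le> cone_ext f X" "cone_ext f X \<le> Re (trace X)" by simp_all
qed

lemma cone_ext_scaleR: assumes "0 \<le> c" shows "cone_ext f (c *\<^sub>R X) = c * cone_ext f X"
proof (cases "c = 0 \<or> Re (trace X) = 0")
  case True
  then show ?thesis by (auto simp: cone_ext_def trace_scaleR)
next
  case False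
  then have "(1 / (c * Re (trace X))) *\<^sub>R (c *\<^sub>R X) = (1 / Re (trace X)) *\<^sub>R X" by simp
  then show ?thesis using False by (simp add: cone_ext_def trace_scaleR)
qed

text \<open>On nonzero \<open>X\<close> and \<open>Y\<close> this is affinity of \<open>f\<close>, applied to the normalisations of
  \<open>X\<close> and \<open>Y\<close> with weights proportional to their traces.\<close>
lemma cone_ext_add: assumes "psd X" "psd Y" shows "cone_ext f (X + Y) = cone_ext f X + cone_ext f Y"
proof (cases "X = 0 \<or> Y = 0")
  case True
  then show ?thesis by (auto simp: cone_ext_zero)
next
  case False
  define s where "s = Re (trace X)"
  define t where "t = Re (trace Y)"
  have "s \<noteq> 0" "t \<noteq> 0" using False psd_trace_eq_0_imp_zero assms s_def t_def by auto
  then have s: "s > 0" and t: "t > 0"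
    using psd_trace_nonneg assms s_def t_def by (simp_all add: order_less_le)
  define r where "r = s / (s + t)"
  have r: "0 \<le> r" "r \<le> 1" "1 - r = t / (s + t)"
    using s t by (simp_all add: r_def field_simps)
  have X: "(1 / s) *\<^sub>R X \<in> DM" and Y: "(1 / t) *\<^sub>R Y \<in> DM"
    using psd_normalize_in_DM assms s t s_def t_def by auto
  have trace: "Re (trace (X + Y)) = s + t" by (simp add: s_def t_def trace_add)
  have normalize: "(1 / (s + t)) *\<^sub>R (X + Y) = r *\<^sub>R ((1 / s) *\<^sub>R X) + (1 - r) *\<^sub>R ((1 / t) *\<^sub>R Y)"
    unfolding r(3) using s t by (simp add: r_def scaleR_add_right)
  have affine: "f (r *\<^sub>R ((1 / s) *\<^sub>R X) + (1 - r) *\<^sub>R ((1 / t) *\<^sub>R Y))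
      = r * f ((1 / s) *\<^sub>R X) + (1 - r) * f ((1 / t) *\<^sub>R Y)"
    using f X Y r unfolding ConvHom01_def by blast
  have "cone_ext f (X + Y) = (s + t) * f ((1 / (s + t)) *\<^sub>R (X + Y))"
    using s t by (simp add: cone_ext_def trace)
  also have "\<dots> = (s + t) * (r * f ((1 / s) *\<^sub>R X) + (1 - r) * f ((1 / t) *\<^sub>R Y))"
    unfolding normalize affine ..
  also have "\<dots> = s * f ((1 / s) *\<^sub>R X) + t * f ((1 / t) *\<^sub>R Y)"
  proof -
    have "(s + t) * r = s" "(s + t) * (1 - r) = t" using s t by (simp_all add: r_def field_simps)
    then show ?thesis by (simp add: distrib_left mult.assoc[symmetric])
  qed
  also have "\<dots> = cone_ext f X + cone_ext f Y"
    using s t by (simp add: cone_ext_def s_def t_def)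
  finally show ?thesis .
qed

lemma cone_ext_sum_diff:
  assumes "finite K" "psd X" "\<And>k. k \<in> K \<Longrightarrow> psd (P k)" "\<And>k. k \<in> K \<Longrightarrow> psd (Q k)"
    and "X = (\<Sum>k\<in>K. c k *\<^sub>R (P k - Q k))"
  shows "cone_ext f X = (\<Sum>k\<in>K. c k * (cone_ext f (P k) - cone_ext f (Q k)))"
  using assms by (intro cone_additive_sum_diff[where C = psd])
    (simp_all add: psd_add psd_scaleR cone_ext_add cone_ext_scaleR)

end

section \<open>Representing such functionals by a trace\<close>

definition mat_unit :: "'n \<Rightarrow> 'n \<Rightarrow> complex^'n^'n" where
  "mat_unit i j = (\<chi> p q. if p = i \<and> q = j then 1 else 0)"

text \<open>With \<open>E\<^sub>i\<^sub>j = mat_unit i j\<close>, \<open>probe_pos k - probe_neg k\<close> is \<open>E\<^sub>i\<^sub>j + E\<^sub>j\<^sub>i\<close> for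
  \<open>k = (i, j, True)\<close> and \<open>\<i> (E\<^sub>i\<^sub>j - E\<^sub>j\<^sub>i)\<close> for \<open>k = (i, j, False)\<close>.\<close>
definition probe_pos :: "'n \<times> 'n \<times> bool \<Rightarrow> complex^'n^'n" where
  "probe_pos = (\<lambda>(i, j, b). if b then outer (axis i 1 + axis j 1) else outer (axis i 1) + outer (axis j 1))"

definition probe_neg :: "'n \<times> 'n \<times> bool \<Rightarrow> complex^'n^'n" where
  "probe_neg = (\<lambda>(i, j, b). if b then outer (axis i 1) + outer (axis j 1) else outer (axis i 1 + axis j \<i>))"

definition herm_coord :: "complex^'n^'n \<Rightarrow> 'n \<times> 'n \<times> bool \<Rightarrow> real" where
  "herm_coord X = (\<lambda>(i, j, b). if b then Re (X$i$j) else Im (X$i$j))"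

lemma psd_probe_pos: "psd (probe_pos k)"
  by (simp add: probe_pos_def psd_outer psd_add split: prod.split)

lemma psd_probe_neg: "psd (probe_neg k)"
  by (simp add: probe_neg_def psd_outer psd_add split: prod.split)

lemma probe_diff_entry:
  "(probe_pos (i, j, b) - probe_neg (i, j, b))$p$q =
     (if b then mat_unit i j $p$q + mat_unit j i $p$q else \<i> * (mat_unit i j $p$q - mat_unit j i $p$q))"
  unfolding probe_pos_def probe_neg_def
  by (cases b; cases "p = i"; cases "q = j"; cases "p = j"; cases "q = i";
      simp add: outer_def axis_def mat_unit_def algebra_simps)

lemma sum_UNIV_pair_bool:
  fixes F :: "'a::finite \<times> 'b::finite \<times> bool \<Rightarrow> 'c::comm_monoid_add"
  shows "(\<Sum>k\<in>UNIV. F k) = (\<Sum>i\<in>UNIV. \<Sum>j\<in>UNIV. F (i, j, True) + F (i, j, False))"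
  by (simp add: UNIV_Times_UNIV[symmetric] sum.cartesian_product' UNIV_bool add.commute del: UNIV_Times_UNIV)

lemma sum_mat_unit_entry:
  fixes c :: "'n::finite \<Rightarrow> 'n \<Rightarrow> complex"
  shows "(\<Sum>i\<in>UNIV. \<Sum>j\<in>UNIV. c i j * mat_unit i j $p$q) = c p q"
    and "(\<Sum>i\<in>UNIV. \<Sum>j\<in>UNIV. c i j * mat_unit j i $p$q) = c q p"
proof -
  have "(\<Sum>j\<in>UNIV. c i j * mat_unit i j $p$q) = (if i = p then c i q else 0)"
    and "(\<Sum>j\<in>UNIV. c i j * mat_unit j i $p$q) = (if i = q then c i p else 0)" for i
    by (auto simp: mat_unit_def if_distrib sum.delta' cong: if_cong)
  then show "(\<Sum>i\<in>UNIV. \<Sum>j\<in>UNIV. c i j * mat_unit i j $p$q) = c p q"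
    and "(\<Sum>i\<in>UNIV. \<Sum>j\<in>UNIV. c i j * mat_unit j i $p$q) = c q p"
    by simp_all
qed

lemma hermitian_decomposition:
  assumes "hermitian X"
  shows "2 *\<^sub>R X = (\<Sum>k\<in>UNIV. herm_coord X k *\<^sub>R (probe_pos k - probe_neg k))"
proof -
  have "(\<Sum>k\<in>UNIV. herm_coord X k *\<^sub>R (probe_pos k - probe_neg k))$p$q = (2 *\<^sub>R X)$p$q" for p q
  proof -
    have "(\<Sum>k\<in>UNIV. herm_coord X k *\<^sub>R (probe_pos k - probe_neg k))$p$q
      = (\<Sum>i\<in>UNIV. \<Sum>j\<in>UNIV. (of_real (Re (X$i$j)) + \<i> * of_real (Im (X$i$j))) * mat_unit i j $p$q
           + (of_real (Re (X$i$j)) - \<i> * of_real (Im (X$i$j))) * mat_unit j i $p$q)"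
      unfolding sum_component sum_UNIV_pair_bool vector_add_component scaleR_matrix_entry probe_diff_entry
      by (intro sum.cong refl) (simp add: herm_coord_def algebra_simps)
    also have "\<dots> = (of_real (Re (X$p$q)) + \<i> * of_real (Im (X$p$q))) + (of_real (Re (X$q$p)) - \<i> * of_real (Im (X$q$p)))"
      by (simp only: sum.distrib sum_mat_unit_entry)
    also have "\<dots> = X$p$q + cnj (X$q$p)"
      by (simp add: complex_eq_iff)
    also have "\<dots> = (2 *\<^sub>R X)$p$q"
      using hermitian_cnj_entry[OF assms, of q p] unfolding scaleR_matrix_entry by simp
    finally show ?thesis .
  qed
  then show ?thesis by (simp add: vec_eq_iff)
qed

definition probe_value :: "(complex^'n^'n \<Rightarrow> real) \<Rightarrow> 'n \<times> 'n \<times> bool \<Rightarrow> real" where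
  "probe_value f k = cone_ext f (probe_pos k) - cone_ext f (probe_neg k)"

text \<open>Real and imaginary part of entry \<open>(i, j)\<close> are half the values of the functional on
  \<open>E\<^sub>i\<^sub>j + E\<^sub>j\<^sub>i\<close> and on \<open>\<i> (E\<^sub>i\<^sub>j - E\<^sub>j\<^sub>i)\<close>.\<close>
definition trace_rep :: "(complex^'n^'n \<Rightarrow> real) \<Rightarrow> complex^'n^'n" where
  "trace_rep f = (\<chi> i j. (of_real (probe_value f (i, j, True)) + \<i> * of_real (probe_value f (i, j, False))) / 2)"

lemma trace_rep_pairing:
  assumes "hermitian X"
  shows "2 * Re (trace (trace_rep f ** X)) = (\<Sum>k\<in>UNIV. herm_coord X k * probe_value f k)"
proof -
  have "trace (trace_rep f ** X) = (\<Sum>i\<in>UNIV. \<Sum>j\<in>UNIV. trace_rep f $i$j * cnj (X$i$j))"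
    unfolding trace_matrix_mult using hermitian_cnj_entry[OF assms] by simp
  then have "2 * Re (trace (trace_rep f ** X)) = (\<Sum>i\<in>UNIV. \<Sum>j\<in>UNIV. 2 * Re (trace_rep f $i$j * cnj (X$i$j)))"
    by (simp add: sum_distrib_left)
  also have "\<dots> = (\<Sum>k\<in>UNIV. herm_coord X k * probe_value f k)"
    unfolding sum_UNIV_pair_bool by (intro sum.cong refl) (simp add: trace_rep_def herm_coord_def algebra_simps)
  finally show ?thesis .
qed

lemma outer_axis_twist_sum:
  "outer (axis i 1 + axis j \<i>) + outer (axis j 1 + axis i \<i>) = 2 *\<^sub>R (outer (axis i 1) + outer (axis j 1))"
  by (auto simp: vec_eq_iff outer_def axis_def scaleR_conv_of_real algebra_simps)

context
  fixes f :: "complex^'n^'n \<Rightarrow> real"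
  assumes f: "f \<in> ConvHom01 DM"
begin

lemma cone_ext_eq_trace: assumes "psd X" shows "cone_ext f X = Re (trace (trace_rep f ** X))"
proof -
  have "2 * cone_ext f X = cone_ext f (2 *\<^sub>R X)" using cone_ext_scaleR[OF f, of 2] by simp
  also have "\<dots> = (\<Sum>k\<in>UNIV. herm_coord X k * probe_value f k)"
    unfolding probe_value_def
    by (rule cone_ext_sum_diff[OF f finite psd_scaleR psd_probe_pos psd_probe_neg])
       (simp_all add: assms hermitian_decomposition psd_imp_hermitian)
  also have "\<dots> = 2 * Re (trace (trace_rep f ** X))"
    using trace_rep_pairing[OF psd_imp_hermitian[OF assms]] by simp
  finally show ?thesis by simp
qed

lemma probe_value_swap_im: "probe_value f (j, i, False) = - probe_value f (i, j, False)"
proof -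
  have twist: "probe_neg (i, j, False) + probe_neg (j, i, False) = 2 *\<^sub>R probe_pos (i, j, False)"
    by (simp add: probe_pos_def probe_neg_def outer_axis_twist_sum)
  have swap: "probe_pos (j, i, False) = probe_pos (i, j, False)"
    by (simp add: probe_pos_def add.commute)
  have "cone_ext f (probe_neg (i, j, False)) + cone_ext f (probe_neg (j, i, False))
      = cone_ext f (probe_neg (i, j, False) + probe_neg (j, i, False))"
    by (rule cone_ext_add[OF f psd_probe_neg psd_probe_neg, symmetric])
  also have "\<dots> = 2 * cone_ext f (probe_pos (i, j, False))"
    unfolding twist by (rule cone_ext_scaleR[OF f]) simp
  finally show ?thesis unfolding probe_value_def swap by linarith
qed

lemma trace_rep_hermitian: "hermitian (trace_rep f)"
  unfolding hermitian_def
proof (intro allI)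
  fix i j
  have "probe_value f (j, i, True) = probe_value f (i, j, True)"
    by (simp add: probe_value_def probe_pos_def probe_neg_def add.commute)
  then show "trace_rep f $ j $ i = cnj (trace_rep f $ i $ j)"
    unfolding trace_rep_def vec_lambda_beta probe_value_swap_im[of j i] by (simp add: complex_eq_iff)
qed

lemma trace_rep_in_Ef: "trace_rep f \<in> Ef"
proof -
  have real: "Im (quad_form (trace_rep f) v) = 0" for v
    using hermitian_quad_form_real[OF trace_rep_hermitian] .
  have form_value: "Re (quad_form (trace_rep f) v) = cone_ext f (outer v)" for v
    using cone_ext_eq_trace[OF psd_outer] trace_mult_outer by metis
  have "psd (trace_rep f)"
    unfolding psd_iff_quad_form using real form_value cone_ext_bounds[OF f psd_outer] by simp
  moreover have "psd (mat 1 - trace_rep f)" unfolding psd_iff_quad_form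
  proof
    fix v
    have "quad_form (mat 1 - trace_rep f) v = of_real ((norm v)^2) - quad_form (trace_rep f) v"
      by (simp add: sesq_diff quad_form_mat_1)
    moreover have "cone_ext f (outer v) \<le> (norm v)^2"
      using cone_ext_bounds(2)[OF f psd_outer, of v] by (simp add: trace_outer)
    ultimately show "Im (quad_form (mat 1 - trace_rep f) v) = 0 \<and> 0 \<le> Re (quad_form (mat 1 - trace_rep f) v)"
      using real form_value by simp
  qed
  ultimately show ?thesis by (simp add: in_Ef_iff)
qed

lemma hs_Ef_trace_rep: "hs_Ef (trace_rep f) = f"
proof
  fix B
  show "hs_Ef (trace_rep f) B = f B"
  proof (cases "B \<in> DM")
    case True
    then show ?thesis
      using cone_ext_eq_trace[of B] cone_ext_DM[OF f True] by (simp add: hs_Ef_def in_DM_iff)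
  next
    case False
    then show ?thesis using f unfolding hs_Ef_def ConvHom01_def by (auto simp: extensional_def)
  qed
qed

end

section \<open>The two isomorphisms\<close>

lemma hs_Ef_in_ConvHom01:
  fixes A :: "complex^'n^'n"
  assumes "A \<in> Ef"
  shows "hs_Ef A \<in> ConvHom01 DM"
  unfolding ConvHom01_def
proof (intro CollectI conjI ballI allI impI)
  show "hs_Ef A \<in> extensional DM" unfolding hs_Ef_def by simp
next
  fix X :: "complex^'n^'n" assume "X \<in> DM"
  then show "0 \<le> hs_Ef A X" "hs_Ef A X \<le> 1"
    unfolding hs_Ef_def using trace_mult_Ef_DM_bounds[OF assms] by auto
next
  fix X Y :: "complex^'n^'n" and r :: real assume "X \<in> DM" "Y \<in> DM" "0 \<le> r \<and> r \<le> 1"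
  moreover from this have "r *\<^sub>R X + (1 - r) *\<^sub>R Y \<in> DM" by (auto intro: DM_convex)
  ultimately show "hs_Ef A (r *\<^sub>R X + (1 - r) *\<^sub>R Y) = r * hs_Ef A X + (1 - r) * hs_Ef A Y"
    unfolding hs_Ef_def by (simp add: trace_mult_add_right trace_mult_scaleR_right)
qed

lemma hs_Ef_inj: "inj_on hs_Ef (Ef :: (complex^'n^'n) set)"
proof
  fix A B :: "complex^'n^'n" assume A: "A \<in> Ef" and B: "B \<in> Ef" and eq: "hs_Ef A = hs_Ef B"
  show "A = B"
  proof (rule hermitian_eq_if_pure_state_pairing_eq)
    show "hermitian A" "hermitian B" using A B psd_imp_hermitian by (auto simp: in_Ef_iff)
    fix v :: "complex^'n" assume "v \<noteq> 0"
    then have "pure_state v \<in> DM" by (rule pure_state_in_DM)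
    then show "Re (trace (A ** pure_state v)) = Re (trace (B ** pure_state v))"
      using fun_cong[OF eq, of "pure_state v"] by (simp add: hs_Ef_def)
  qed
qed

lemma hs_Ef_bij: "bij_betw hs_Ef (Ef :: (complex^'n^'n) set) (ConvHom01 DM)"
  unfolding bij_betw_def
  using hs_Ef_inj hs_Ef_in_ConvHom01 trace_rep_in_Ef hs_Ef_trace_rep by (metis image_eqI subset_antisym image_subsetI subsetI)

lemma hs_Ef_add: "hs_Ef (A + B) = restrict (\<lambda>X. hs_Ef A X + hs_Ef B X) DM"
  unfolding hs_Ef_def by (rule restrict_ext) (simp add: trace_mult_add_left)

lemma hs_Ef_scaleR: "hs_Ef (r *\<^sub>R A) = restrict (\<lambda>X. r * hs_Ef A X) DM"
  unfolding hs_Ef_def by (rule restrict_ext) (simp add: trace_mult_scaleR_left)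

lemma hs_Ef_mat_1: "hs_Ef (mat 1) = restrict (\<lambda>_. 1) DM"
  unfolding hs_Ef_def by (rule restrict_ext) (simp add: in_DM_iff)

lemma Ef_sum_le_mat_1_iff:
  assumes "A \<in> Ef" "B \<in> Ef"
  shows "loewner_le (A + B) (mat 1) \<longleftrightarrow> (\<forall>X\<in>DM. hs_Ef A X + hs_Ef B X \<le> 1)"
proof -
  have "hermitian (A + B)"
    using assms by (intro psd_imp_hermitian psd_add) (simp_all add: in_Ef_iff)
  then show ?thesis
    by (simp add: hermitian_le_mat_1_iff hs_Ef_def trace_mult_add_left)
qed

lemma hs_DM_in_EModHom01:
  fixes B :: "complex^'n^'n"
  assumes "B \<in> DM"
  shows "hs_DM B \<in> EModHom01"
  unfolding EModHom01_def
proof (intro CollectI conjI ballI allI impI)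
  show "hs_DM B \<in> extensional Ef" unfolding hs_DM_def by simp
next
  fix A :: "complex^'n^'n" assume "A \<in> Ef"
  then show "0 \<le> hs_DM B A" "hs_DM B A \<le> 1"
    unfolding hs_DM_def using trace_mult_Ef_DM_bounds[OF _ assms] trace_mul_sym[of B A] by auto
next
  show "hs_DM B (mat 1) = 1"
    unfolding hs_DM_def restrict_apply'[OF mat_1_in_Ef] using assms by (simp add: in_DM_iff)
next
  fix A C :: "complex^'n^'n" assume "A \<in> Ef" "C \<in> Ef" "loewner_le (A + C) (mat 1)"
  moreover from this have "A + C \<in> Ef" by (rule Ef_add)
  ultimately show "hs_DM B (A + C) = hs_DM B A + hs_DM B C"
    unfolding hs_DM_def by (simp add: trace_mult_add_right)
next
  fix r :: real and A :: "complex^'n^'n" assume "A \<in> Ef" "0 \<le> r \<and> r \<le> 1"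
  moreover from this have "r *\<^sub>R A \<in> Ef" by (simp add: Ef_scaleR)
  ultimately show "hs_DM B (r *\<^sub>R A) = r * hs_DM B A"
    unfolding hs_DM_def by (simp add: trace_mult_scaleR_right)
qed

lemma hs_DM_inj: "inj_on hs_DM (DM :: (complex^'n^'n) set)"
proof
  fix A B :: "complex^'n^'n" assume A: "A \<in> DM" and B: "B \<in> DM" and eq: "hs_DM A = hs_DM B"
  show "A = B"
  proof (rule hermitian_eq_if_pure_state_pairing_eq)
    show "hermitian A" "hermitian B" using A B psd_imp_hermitian by (auto simp: in_DM_iff)
    fix v :: "complex^'n" assume "v \<noteq> 0"
    then have "pure_state v \<in> Ef" using pure_state_in_DM DM_subset_Ef by blast
    then show "Re (trace (A ** pure_state v)) = Re (trace (B ** pure_state v))"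
      using fun_cong[OF eq, of "pure_state v"] by (simp add: hs_DM_def)
  qed
qed

lemma EModHom01_bounds: "g \<in> EModHom01 \<Longrightarrow> A \<in> Ef \<Longrightarrow> 0 \<le> g A \<and> g A \<le> 1"
  unfolding EModHom01_def by blast

lemma EModHom01_mat_1: "g \<in> EModHom01 \<Longrightarrow> g (mat 1) = 1"
  unfolding EModHom01_def by blast

lemma EModHom01_add:
  "g \<in> EModHom01 \<Longrightarrow> A \<in> Ef \<Longrightarrow> B \<in> Ef \<Longrightarrow> loewner_le (A + B) (mat 1) \<Longrightarrow> g (A + B) = g A + g B"
  unfolding EModHom01_def by blast

lemma EModHom01_scaleR: "g \<in> EModHom01 \<Longrightarrow> A \<in> Ef \<Longrightarrow> 0 \<le> r \<Longrightarrow> r \<le> 1 \<Longrightarrow> g (r *\<^sub>R A) = r * g A"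
  unfolding EModHom01_def by blast

lemma EModHom01_restrict_DM:
  fixes g :: "complex^'n^'n \<Rightarrow> real"
  assumes g: "g \<in> EModHom01"
  shows "restrict g DM \<in> ConvHom01 DM"
  unfolding ConvHom01_def
proof (intro CollectI conjI ballI allI impI)
  show "restrict g DM \<in> extensional DM" by simp
next
  fix X :: "complex^'n^'n" assume "X \<in> DM"
  then show "0 \<le> restrict g DM X" "restrict g DM X \<le> 1"
    using EModHom01_bounds[OF g] DM_subset_Ef by auto
next
  fix X Y :: "complex^'n^'n" and r :: real assume X: "X \<in> DM" and Y: "Y \<in> DM" and r: "0 \<le> r \<and> r \<le> 1"
  have XY_Ef: "X \<in> Ef" "Y \<in> Ef" using X Y DM_subset_Ef by auto
  then have XY: "r *\<^sub>R X \<in> Ef" "(1 - r) *\<^sub>R Y \<in> Ef" using r by (auto intro!: Ef_scaleR)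
  have convex: "r *\<^sub>R X + (1 - r) *\<^sub>R Y \<in> DM" using X Y r by (auto intro: DM_convex)
  then have "loewner_le (r *\<^sub>R X + (1 - r) *\<^sub>R Y) (mat 1)"
    using DM_subset_Ef by (auto simp: Ef_def)
  then have "g (r *\<^sub>R X + (1 - r) *\<^sub>R Y) = g (r *\<^sub>R X) + g ((1 - r) *\<^sub>R Y)"
    using EModHom01_add[OF g XY] by blast
  also have "\<dots> = r * g X + (1 - r) * g Y"
    using EModHom01_scaleR[OF g XY_Ef(1), of r] EModHom01_scaleR[OF g XY_Ef(2), of "1 - r"] r by simp
  finally show "restrict g DM (r *\<^sub>R X + (1 - r) *\<^sub>R Y) = r * restrict g DM X + (1 - r) * restrict g DM Y"
    using X Y convex by simp
qed

lemma EModHom01_scaleR_DM: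
  assumes g: "g \<in> EModHom01" and "D \<in> DM" "0 \<le> t" "t *\<^sub>R D \<in> Ef"
  shows "g (t *\<^sub>R D) = t * g D"
proof (cases "t \<le> 1")
  case True
  then show ?thesis using EModHom01_scaleR[OF g] assms DM_subset_Ef by blast
next
  case False
  then have "0 \<le> 1 / t" "1 / t \<le> 1" by auto
  then have "g ((1 / t) *\<^sub>R (t *\<^sub>R D)) = (1 / t) * g (t *\<^sub>R D)"
    using EModHom01_scaleR[OF g assms(4)] by blast
  then show ?thesis using False by simp
qed

text \<open>An effect-module map is determined by its values on states, by homogeneity.\<close>
lemma EModHom01_eq_trace_if_on_DM:
  fixes g :: "complex^'n^'n \<Rightarrow> real"
  assumes g: "g \<in> EModHom01" and A: "hs_Ef A = restrict g DM" and Y: "Y \<in> Ef"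
  shows "g Y = Re (trace (A ** Y))"
proof -
  have psd: "psd Y" using Y in_Ef_iff by blast
  define t where "t = Re (trace Y)"
  show ?thesis
  proof (cases "t = 0")
    case True
    then have "Y = 0" using psd_trace_eq_0_imp_zero[OF psd] t_def by simp
    moreover have "g (0 *\<^sub>R mat 1) = 0" using EModHom01_scaleR[OF g mat_1_in_Ef, of 0] by simp
    ultimately show ?thesis by (simp add: trace_def)
  next
    case False
    then have t: "t > 0" using psd_trace_nonneg[OF psd] t_def by simp
    define D where "D = (1 / t) *\<^sub>R Y"
    have D: "D \<in> DM" unfolding D_def t_def using psd_normalize_in_DM[OF psd] t t_def by simp
    have Y_eq: "Y = t *\<^sub>R D" unfolding D_def using t by simp
    have "g D = Re (trace (A ** D))" using fun_cong[OF A, of D] D by (simp add: hs_Ef_def)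
    then show ?thesis
      using EModHom01_scaleR_DM[OF g D, of t] t Y Y_eq by (simp add: trace_mult_scaleR_right)
  qed
qed

lemma hs_DM_surj:
  fixes g :: "complex^'n^'n \<Rightarrow> real"
  assumes g: "g \<in> EModHom01"
  shows "g \<in> hs_DM ` DM"
proof -
  define A where "A = trace_rep (restrict g DM)"
  have f: "restrict g DM \<in> ConvHom01 DM" using EModHom01_restrict_DM[OF g] .
  have A: "A \<in> Ef" "hs_Ef A = restrict g DM"
    unfolding A_def using trace_rep_in_Ef[OF f] hs_Ef_trace_rep[OF f] by simp_all
  note pairing = EModHom01_eq_trace_if_on_DM[OF g A(2)]
  have "Re (trace A) = 1" using pairing[OF mat_1_in_Ef] EModHom01_mat_1[OF g] by simp
  moreover have "psd A" using A(1) in_Ef_iff by blast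
  ultimately have "A \<in> DM" using psd_trace_real[of A] by (simp add: in_DM_iff)
  moreover have "hs_DM A = g"
  proof
    fix Y :: "complex^'n^'n" show "hs_DM A Y = g Y"
      using pairing g trace_mul_sym[of A Y] unfolding hs_DM_def EModHom01_def
      by (cases "Y \<in> Ef") (auto simp: extensional_def)
  qed
  ultimately show ?thesis by blast
qed

lemma hs_DM_bij: "bij_betw hs_DM (DM :: (complex^'n^'n) set) EModHom01"
  unfolding bij_betw_def using hs_DM_inj hs_DM_in_EModHom01 hs_DM_surj by blast

lemma hs_DM_convex_comb:
  "hs_DM (r *\<^sub>R B1 + (1 - r) *\<^sub>R B2) = restrict (\<lambda>A. r * hs_DM B1 A + (1 - r) * hs_DM B2 A) Ef"
  unfolding hs_DM_def by (rule restrict_ext) (simp add: trace_mult_add_left trace_mult_scaleR_left)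

text \<open>Unit and counit: both sides are the pairing \<open>tr (A B)\<close> of corresponding elements.\<close>
lemma eval_eq_hs_DM_the_inv_hs_Ef:
  assumes "B \<in> DM" "f \<in> ConvHom01 DM"
  shows "f B = hs_DM B (the_inv_into Ef hs_Ef f)"
proof -
  have f: "f \<in> hs_Ef ` Ef" using assms(2) bij_betw_imp_surj_on[OF hs_Ef_bij] by blast
  define A where "A = the_inv_into Ef hs_Ef f"
  have "A \<in> Ef" "hs_Ef A = f"
    unfolding A_def by (simp_all add: the_inv_into_into[OF hs_Ef_inj f] f_the_inv_into_f[OF hs_Ef_inj f])
  then show ?thesis using assms(1) trace_mul_sym[of A B] by (auto simp: A_def[symmetric] hs_Ef_def hs_DM_def)
qed

lemma eval_eq_hs_Ef_the_inv_hs_DM: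
  assumes "A \<in> Ef" "g \<in> EModHom01"
  shows "g A = hs_Ef A (the_inv_into DM hs_DM g)"
proof -
  have g: "g \<in> hs_DM ` DM" using assms(2) bij_betw_imp_surj_on[OF hs_DM_bij] by blast
  define B where "B = the_inv_into DM hs_DM g"
  have "B \<in> DM" "hs_DM B = g"
    unfolding B_def by (simp_all add: the_inv_into_into[OF hs_DM_inj g] f_the_inv_into_f[OF hs_DM_inj g])
  then show ?thesis using assms(1) trace_mul_sym[of A B] by (auto simp: B_def[symmetric] hs_Ef_def hs_DM_def)
qed

section \<open>Unitary conjugation\<close>

lemma cadj_cadj: "cadj (cadj U) = U"
  by (simp add: cadj_def vec_eq_iff)

lemma cinner_matrix_vector_mult: "cinner x (V *v y) = cinner (cadj V *v x) y"
proof -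
  have "cinner x (V *v y) = (\<Sum>i\<in>UNIV. \<Sum>j\<in>UNIV. cnj (x$i) * V$i$j * y$j)"
    by (simp add: cinner_def matrix_vector_mult_def sum_distrib_left mult.assoc)
  also have "\<dots> = (\<Sum>j\<in>UNIV. \<Sum>i\<in>UNIV. cnj (x$i) * V$i$j * y$j)" by (rule sum.swap)
  also have "\<dots> = cinner (cadj V *v x) y"
    by (simp add: cinner_def matrix_vector_mult_def cadj_def sum_distrib_right sum_distrib_left
        mult.commute mult.left_commute)
  finally show ?thesis .
qed

lemma quad_form_conj: "quad_form (V ** X ** cadj V) v = quad_form X (cadj V *v v)"
proof -
  have "(V ** X ** cadj V) *v v = V *v (X *v (cadj V *v v))" by (metis matrix_vector_mul_assoc)
  then show ?thesis by (simp add: sesq_cinner cinner_matrix_vector_mult)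
qed

lemma psd_conj: "psd X \<Longrightarrow> psd (V ** X ** cadj V)"
  unfolding psd_iff_quad_form quad_form_conj by blast

lemma trace_mult_conj: "trace ((U ** B ** cadj U) ** A) = trace (B ** (cadj U ** A ** U))"
proof -
  have "trace ((U ** B ** cadj U) ** A) = trace ((U ** B) ** (cadj U ** A))" by (simp add: matrix_mul_assoc)
  also have "\<dots> = trace ((cadj U ** A) ** (U ** B))" by (rule trace_mul_sym)
  also have "\<dots> = trace ((cadj U ** A ** U) ** B)" by (simp add: matrix_mul_assoc)
  also have "\<dots> = trace (B ** (cadj U ** A ** U))" by (rule trace_mul_sym)
  finally show ?thesis .
qed

lemma DM_conj: assumes "cadj U ** U = mat 1" "B \<in> DM" shows "U ** B ** cadj U \<in> DM"
proof -
  have "trace (U ** B ** cadj U) = trace B" using trace_mult_conj[of U B "mat 1"] assms(1) by simp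
  then show ?thesis using assms(2) psd_conj[of B U] by (simp add: in_DM_iff)
qed

lemma Ef_conj: assumes "U ** cadj U = mat 1" "A \<in> Ef" shows "U ** A ** cadj U \<in> Ef"
proof -
  have "U ** (mat 1 - A) ** cadj U = mat 1 - U ** A ** cadj U"
    using assms(1) by (simp add: matrix_mult_diff_left matrix_mult_diff_right)
  then show ?thesis using assms(2) psd_conj[of _ U] unfolding in_Ef_iff by metis
qed

lemma hs_DM_conj:
  fixes U :: "complex^'n^'m" and B :: "complex^'n^'n"
  assumes "cadj U ** U = mat 1"
  shows "hs_DM (U ** B ** cadj U) = restrict (\<lambda>A. hs_DM B (cadj U ** A ** U)) Ef"
  unfolding hs_DM_def
proof (rule restrict_ext)
  fix A :: "complex^'m^'m" assume "A \<in> Ef"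
  then have "cadj U ** A ** U \<in> Ef" using Ef_conj[of "cadj U"] assms by (simp add: cadj_cadj)
  then show "Re (trace (U ** B ** cadj U ** A)) = restrict (\<lambda>A. Re (trace (B ** A))) Ef (cadj U ** A ** U)"
    by (simp add: trace_mult_conj)
qed

lemma hs_Ef_conj:
  fixes U :: "complex^'n^'m" and A :: "complex^'n^'n"
  assumes "U ** cadj U = mat 1"
  shows "hs_Ef (U ** A ** cadj U) = restrict (\<lambda>B. hs_Ef A (cadj U ** B ** U)) DM"
  unfolding hs_Ef_def
proof (rule restrict_ext)
  fix B :: "complex^'m^'m" assume "B \<in> DM"
  then have "cadj U ** B ** U \<in> DM" using DM_conj[of "cadj U"] assms by (simp add: cadj_cadj)
  then show "Re (trace (U ** A ** cadj U ** B)) = restrict (\<lambda>B. Re (trace (A ** B))) DM (cadj U ** B ** U)"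
    by (simp add: trace_mult_conj)
qed

theorem theorem4p8:
  fixes U :: "complex^'n::finite^'m::finite"
  assumes "unitary_map U"
  shows
    \<comment> \<open>hs_Ef is an isomorphism of effect modules Ef(H) -> Conv(DM(H),[0,1])\<close>
    "bij_betw (hs_Ef :: complex^'n^'n \<Rightarrow> _) Ef (ConvHom01 DM)
     \<and> hs_Ef (mat 1 :: complex^'n^'n) = restrict (\<lambda>_. 1) DM
     \<and> (\<forall>A\<in>(Ef :: (complex^'n^'n) set). \<forall>B\<in>Ef.
          loewner_le (A + B) (mat 1) \<longleftrightarrow> (\<forall>X\<in>DM. hs_Ef A X + hs_Ef B X \<le> 1))
     \<and> (\<forall>A\<in>(Ef :: (complex^'n^'n) set). \<forall>B\<in>Ef. loewner_le (A + B) (mat 1) \<longrightarrow>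
          hs_Ef (A + B) = restrict (\<lambda>X. hs_Ef A X + hs_Ef B X) DM)
     \<and> (\<forall>r::real. \<forall>A\<in>(Ef :: (complex^'n^'n) set). 0 \<le> r \<and> r \<le> 1 \<longrightarrow>
          hs_Ef (r *\<^sub>R A) = restrict (\<lambda>X. r * hs_Ef A X) DM)
     \<comment> \<open>hs_DM is an isomorphism of convex sets DM(H) -> EMod(Ef(H),[0,1])\<close>
     \<and> bij_betw (hs_DM :: complex^'n^'n \<Rightarrow> _) DM EModHom01
     \<and> (\<forall>B1\<in>(DM :: (complex^'n^'n) set). \<forall>B2\<in>DM. \<forall>r::real. 0 \<le> r \<and> r \<le> 1 \<longrightarrow>
          hs_DM (r *\<^sub>R B1 + (1 - r) *\<^sub>R B2) =
            restrict (\<lambda>A. r * hs_DM B1 A + (1 - r) * hs_DM B2 A) Ef)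
     \<comment> \<open>the vertical functors are well defined on the unitary U : H -> K\<close>
     \<and> (\<forall>B\<in>(DM :: (complex^'n^'n) set). U ** B ** cadj U \<in> DM)
     \<and> (\<forall>A\<in>(Ef :: (complex^'n^'n) set). U ** A ** cadj U \<in> Ef)
     \<comment> \<open>naturality\<close>
     \<and> (\<forall>B\<in>(DM :: (complex^'n^'n) set).
          hs_DM (U ** B ** cadj U) = restrict (\<lambda>A. hs_DM B (cadj U ** A ** U)) Ef)
     \<and> (\<forall>A\<in>(Ef :: (complex^'n^'n) set).
          hs_Ef (U ** A ** cadj U) = restrict (\<lambda>B. hs_Ef A (cadj U ** B ** U)) DM)
     \<comment> \<open>map of adjunctions: compatibility with unit and counit of Conv -| EMod^op\<close>
     \<and> (\<forall>B\<in>(DM :: (complex^'n^'n) set).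
          restrict (\<lambda>f. f B) (ConvHom01 DM) =
          restrict (\<lambda>f. hs_DM B (the_inv_into Ef hs_Ef f)) (ConvHom01 DM))
     \<and> (\<forall>A\<in>(Ef :: (complex^'n^'n) set).
          restrict (\<lambda>g. g A) EModHom01 =
          restrict (\<lambda>g. hs_Ef A (the_inv_into DM hs_DM g)) EModHom01)"
proof -
  have U: "cadj U ** U = mat 1" "U ** cadj U = mat 1"
    using assms unfolding unitary_map_def by auto
  have unit: "restrict (\<lambda>f. f B) (ConvHom01 DM) = restrict (\<lambda>f. hs_DM B (the_inv_into Ef hs_Ef f)) (ConvHom01 DM)"
    if "B \<in> DM" for B :: "complex^'n^'n"
    using that eval_eq_hs_DM_the_inv_hs_Ef by (intro restrict_ext)
  have counit: "restrict (\<lambda>g. g A) EModHom01 = restrict (\<lambda>g. hs_Ef A (the_inv_into DM hs_DM g)) EModHom01"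
    if "A \<in> Ef" for A :: "complex^'n^'n"
    using that eval_eq_hs_Ef_the_inv_hs_DM by (intro restrict_ext)
  show ?thesis
    by (intro conjI ballI allI impI unit counit hs_Ef_bij hs_DM_bij Ef_sum_le_mat_1_iff
        hs_Ef_mat_1 hs_Ef_add hs_Ef_scaleR hs_DM_convex_comb DM_conj[OF U(1)] Ef_conj[OF U(2)]
        hs_DM_conj[OF U(1)] hs_Ef_conj[OF U(2)]; assumption)
qed

end
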